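(* Let $R$ be a commutative Noetherian ring with unity such that $\Gamma_E(R)$ has at least three vertices. Then $\Gamma_E(R)$ is not a complete graph.
   Context: For $x,y\in R$ write $x\sim y$ iff $\operatorname{ann}(x)=\operatorname{ann}(y)$; $[x]$ denotes the equivalence class of $x$. Let $Z^*(R)$ be the set of nonzero zero divisors of $R$. The graph $\Gamma_E(R)$ is the simple graph whose vertices are the classes $[x]$ with $x\in Z^*(R)$, two distinct vertices $[x],[y]$ being adjacent iff $xy=0$ (this is independent of representatives). *)

theory Defs
  imports "HOL-Algebra.Ring_Divisibility"
begin

definition ann :: "('a, 'b) ring_scheme \<Rightarrow> 'a \<Rightarrow> 'a set" where
  "ann R x = {y \<in> carrier R. x \<otimes>\<^bsub>R\<^esub> y = \<zero>\<^bsub>R\<^esub>}"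

definition nz_zero_divisors :: "('a, 'b) ring_scheme \<Rightarrow> 'a set" where
  "nz_zero_divisors R = {x \<in> carrier R. x \<noteq> \<zero>\<^bsub>R\<^esub> \<and>
      (\<exists>y \<in> carrier R. y \<noteq> \<zero>\<^bsub>R\<^esub> \<and> x \<otimes>\<^bsub>R\<^esub> y = \<zero>\<^bsub>R\<^esub>)}"

definition ann_class :: "('a, 'b) ring_scheme \<Rightarrow> 'a \<Rightarrow> 'a set" where
  "ann_class R x = {y \<in> carrier R. ann R y = ann R x}"

definition GammaE_vertices :: "('a, 'b) ring_scheme \<Rightarrow> 'a set set" where
  "GammaE_vertices R = ann_class R ` nz_zero_divisors R"

text \<open>Adjacency: distinct classes [x], [y] with xy = 0 (independent of representatives).\<close>
definition GammaE_adj :: "('a, 'b) ring_scheme \<Rightarrow> 'a set \<Rightarrow> 'a set \<Rightarrow> bool" where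
  "GammaE_adj R A B \<longleftrightarrow> A \<noteq> B \<and>
      (\<exists>x \<in> nz_zero_divisors R. \<exists>y \<in> nz_zero_divisors R.
         A = ann_class R x \<and> B = ann_class R y \<and> x \<otimes>\<^bsub>R\<^esub> y = \<zero>\<^bsub>R\<^esub>)"

definition GammaE_complete :: "('a, 'b) ring_scheme \<Rightarrow> bool" where
  "GammaE_complete R \<longleftrightarrow>
     (\<forall>A \<in> GammaE_vertices R. \<forall>B \<in> GammaE_vertices R. A \<noteq> B \<longrightarrow> GammaE_adj R A B)"

end

theory Submission
  imports Defs
begin

text \<open>If \<open>\<Gamma>\<^sub>E(R)\<close> is complete, then \<open>ab = 0\<close> whenever \<open>a, b \<in> Z\<^sup>*(R)\<close> have different
  annihilators. By the Noetherian hypothesis pick \<open>x \<in> Z\<^sup>*(R)\<close> with \<open>ann x\<close> maximal. For every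
  other vertex \<open>[y]\<close>, an element \<open>r \<in> ann x - ann y\<close> lies in \<open>[y]\<close> (otherwise \<open>ry = 0\<close>), and
  \<open>r\<^sup>2 \<noteq> 0\<close> since \<open>r \<notin> ann y = ann r\<close>. Two vertices other than \<open>[x]\<close> thus give \<open>r, s\<close> with
  \<open>r\<^sup>2, s\<^sup>2 \<noteq> 0\<close> and \<open>rs = rx = sx = 0\<close>. Then \<open>r + s\<close> is a zero divisor (killed by \<open>x\<close>) whose
  annihilator differs from that of \<open>r\<close> or of \<open>s\<close>, forcing \<open>r\<^sup>2 = 0\<close> or \<open>s\<^sup>2 = 0\<close>.\<close>

lemma (in noetherian_ring) exists_maximal_ideal_in_set:
  assumes "S \<noteq> {}" and "S \<subseteq> {I. ideal I R}"
  shows "\<exists>M\<in>S. \<forall>I\<in>S. M \<subseteq> I \<longrightarrow> I = M"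
proof (rule subset_Zorn)
  fix C assume chain: "subset.chain S C"
  show "\<exists>U\<in>S. \<forall>I\<in>C. I \<subseteq> U"
  proof (cases "C = {}")
    case True
    then show ?thesis using assms(1) by blast
  next
    case False
    have "C \<subseteq> S" using chain unfolding pred_on.chain_def by simp
    moreover have "subset.chain {I. ideal I R} C"
      using chain assms(2) unfolding pred_on.chain_def by blast
    then have "\<Union>C \<in> C" using ideal_chain_is_trivial[OF False] by simp
    ultimately show ?thesis by blast
  qed
qed

lemma (in cring) ann_is_ideal:
  assumes "x \<in> carrier R"
  shows "ideal (ann R x) R"
proof (rule idealI)
  show "ring R" by (rule ring_axioms)
  show "subgroup (ann R x) (add_monoid R)"
  proof (rule add.subgroupI)
    show "ann R x \<subseteq> carrier R" by (auto simp: ann_def)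
    show "ann R x \<noteq> {}" using assms by (auto simp: ann_def)
  next
    fix a assume "a \<in> ann R x"
    then show "\<ominus> a \<in> ann R x" using assms by (auto simp: ann_def r_minus)
  next
    fix a b assume "a \<in> ann R x" "b \<in> ann R x"
    then show "a \<oplus> b \<in> ann R x" using assms by (auto simp: ann_def r_distr)
  qed
next
  fix a y assume "a \<in> ann R x" "y \<in> carrier R"
  then show "y \<otimes> a \<in> ann R x" using assms by (auto simp: ann_def m_lcomm[of x y a])
next
  fix a y assume "a \<in> ann R x" "y \<in> carrier R"
  then show "a \<otimes> y \<in> ann R x" using assms by (simp add: ann_def m_assoc[symmetric])
qed

lemma (in cring) mem_ann_commute:
  assumes "a \<in> carrier R" and "b \<in> carrier R"
  shows "a \<in> ann R b \<longleftrightarrow> b \<in> ann R a"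
  using assms by (simp add: ann_def m_comm)

lemma ann_class_eq_iff:
  assumes "a \<in> carrier R"
  shows "ann_class R a = ann_class R b \<longleftrightarrow> ann R a = ann R b"
proof
  assume "ann_class R a = ann_class R b"
  moreover have "a \<in> ann_class R a" using assms by (simp add: ann_class_def)
  ultimately show "ann R a = ann R b" by (simp add: ann_class_def)
qed (simp add: ann_class_def)

lemma nz_zero_divisorsD:
  assumes "a \<in> nz_zero_divisors R"
  shows "a \<in> carrier R" and "a \<noteq> \<zero>\<^bsub>R\<^esub>"
  using assms by (auto simp: nz_zero_divisors_def)

lemma (in cring) GammaE_complete_mult_eq_zero:
  assumes complete: "GammaE_complete R"
    and a: "a \<in> nz_zero_divisors R" and b: "b \<in> nz_zero_divisors R"
    and ann_ab: "ann R a \<noteq> ann R b"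
  shows "a \<otimes> b = \<zero>"
proof -
  note ac = nz_zero_divisorsD(1)[OF a] and bc = nz_zero_divisorsD(1)[OF b]
  have "ann_class R a \<noteq> ann_class R b" using ann_ab ann_class_eq_iff[OF ac] by simp
  moreover have "ann_class R a \<in> GammaE_vertices R" "ann_class R b \<in> GammaE_vertices R"
    using a b by (simp_all add: GammaE_vertices_def)
  ultimately have "GammaE_adj R (ann_class R a) (ann_class R b)"
    using complete unfolding GammaE_complete_def by blast
  then obtain x y where x: "x \<in> nz_zero_divisors R" and y: "y \<in> nz_zero_divisors R"
    and class_a: "ann_class R a = ann_class R x" and class_b: "ann_class R b = ann_class R y"
    and "x \<otimes> y = \<zero>"
    unfolding GammaE_adj_def by blast
  note xc = nz_zero_divisorsD(1)[OF x] and yc = nz_zero_divisorsD(1)[OF y]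
  have "y \<in> ann R a" using \<open>x \<otimes> y = \<zero>\<close> yc class_a ann_class_eq_iff[OF ac]
    by (simp add: ann_def)
  then have "a \<in> ann R b" using class_b ann_class_eq_iff[OF bc] mem_ann_commute[OF yc ac] by simp
  then show ?thesis using ac bc by (simp add: ann_def m_comm)
qed

lemma (in cring) GammaE_complete_square_eq_zero:
  assumes complete: "GammaE_complete R"
    and r: "r \<in> nz_zero_divisors R" and s: "s \<in> nz_zero_divisors R"
    and x: "x \<in> nz_zero_divisors R"
    and rs_ann: "ann R r \<noteq> ann R s" and rx_ann: "ann R r \<noteq> ann R x"
    and sx_ann: "ann R s \<noteq> ann R x"
  shows "r \<otimes> r = \<zero> \<or> s \<otimes> s = \<zero>"
proof (rule ccontr)
  assume squares: "\<not> (r \<otimes> r = \<zero> \<or> s \<otimes> s = \<zero>)"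
  note carrier = nz_zero_divisorsD(1)[OF r] nz_zero_divisorsD(1)[OF s]
    nz_zero_divisorsD(1)[OF x]
  have rs: "r \<otimes> s = \<zero>" using GammaE_complete_mult_eq_zero[OF complete r s rs_ann] .
  have rx: "r \<otimes> x = \<zero>" using GammaE_complete_mult_eq_zero[OF complete r x rx_ann] .
  have sx: "s \<otimes> x = \<zero>" using GammaE_complete_mult_eq_zero[OF complete s x sx_ann] .
  have sr: "s \<otimes> r = \<zero>" using rs carrier by (simp add: m_comm)
  have sum_r: "(r \<oplus> s) \<otimes> r = r \<otimes> r" and sum_s: "(r \<oplus> s) \<otimes> s = s \<otimes> s"
    using rs sr carrier by (simp_all add: l_distr)
  have "r \<oplus> s \<noteq> \<zero>" using sum_r squares carrier by auto
  moreover have "(r \<oplus> s) \<otimes> x = \<zero>" using rx sx carrier by (simp add: l_distr)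
  ultimately have sum: "r \<oplus> s \<in> nz_zero_divisors R"
    using carrier nz_zero_divisorsD(2)[OF x] by (auto simp: nz_zero_divisors_def)
  consider "ann R (r \<oplus> s) \<noteq> ann R r" | "ann R (r \<oplus> s) \<noteq> ann R s"
    using rs_ann by blast
  then show False
  proof cases
    case 1
    then have "(r \<oplus> s) \<otimes> r = \<zero>" by (rule GammaE_complete_mult_eq_zero[OF complete sum r])
    then show False using sum_r squares by simp
  next
    case 2
    then have "(r \<oplus> s) \<otimes> s = \<zero>" by (rule GammaE_complete_mult_eq_zero[OF complete sum s])
    then show False using sum_s squares by simp
  qed
qed

lemma (in cring) GammaE_complete_non_nilpotent_in_class:
  assumes complete: "GammaE_complete R"
    and x: "x \<in> nz_zero_divisors R"
    and x_max: "\<And>w. w \<in> nz_zero_divisors R \<Longrightarrow> ann R x \<subseteq> ann R w \<Longrightarrow> ann R w = ann R x"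
    and y: "y \<in> nz_zero_divisors R" and "ann R y \<noteq> ann R x"
  shows "\<exists>r \<in> nz_zero_divisors R. ann R r = ann R y \<and> r \<otimes> r \<noteq> \<zero>"
proof -
  note carrier = nz_zero_divisorsD(1)[OF x] nz_zero_divisorsD(1)[OF y]
  obtain r where "r \<in> ann R x" and r_y: "r \<notin> ann R y"
    using x_max[OF y] \<open>ann R y \<noteq> ann R x\<close> by blast
  then have rc: "r \<in> carrier R" and "x \<otimes> r = \<zero>" by (auto simp: ann_def)
  have "y \<otimes> r \<noteq> \<zero>" using r_y rc by (simp add: ann_def)
  then have "r \<noteq> \<zero>" using carrier by auto
  then have rZ: "r \<in> nz_zero_divisors R"
    using \<open>x \<otimes> r = \<zero>\<close> rc carrier nz_zero_divisorsD(2)[OF x] m_comm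
    by (auto simp: nz_zero_divisors_def)
  have "ann R r = ann R y"
  proof (rule ccontr)
    assume "ann R r \<noteq> ann R y"
    then have "r \<otimes> y = \<zero>" using GammaE_complete_mult_eq_zero[OF complete rZ y] by blast
    then show False using \<open>y \<otimes> r \<noteq> \<zero>\<close> rc carrier by (simp add: m_comm)
  qed
  moreover have "r \<otimes> r \<noteq> \<zero>"
    using r_y rc unfolding calculation[symmetric] by (simp add: ann_def)
  ultimately show ?thesis using rZ by blast
qed

lemma ex_maximal_ann:
  fixes R (structure)
  assumes "cring R" and "noetherian_ring R" and "S \<noteq> {}" and "S \<subseteq> carrier R"
  obtains x where "x \<in> S" and "\<And>w. w \<in> S \<Longrightarrow> ann R x \<subseteq> ann R w \<Longrightarrow> ann R w = ann R x"
proof -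
  interpret cring R by fact
  interpret noetherian_ring R by fact
  have "ann R ` S \<subseteq> {I. ideal I R}"
    using assms(4) by (intro image_subsetI) (simp add: ann_is_ideal subsetD)
  moreover have "ann R ` S \<noteq> {}" using assms(3) by simp
  ultimately have "\<exists>M \<in> ann R ` S. \<forall>I \<in> ann R ` S. M \<subseteq> I \<longrightarrow> I = M"
    by (intro exists_maximal_ideal_in_set)
  then show thesis using that by blast
qed

lemma GammaE_two_vertices_avoiding:
  assumes "\<exists>A \<in> GammaE_vertices R. \<exists>B \<in> GammaE_vertices R. \<exists>C \<in> GammaE_vertices R.
           A \<noteq> B \<and> A \<noteq> C \<and> B \<noteq> C"
  obtains y z where "y \<in> nz_zero_divisors R" "z \<in> nz_zero_divisors R"
    and "ann R y \<noteq> ann R x" "ann R z \<noteq> ann R x" "ann R y \<noteq> ann R z"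
proof -
  obtain a b c where abc: "a \<in> nz_zero_divisors R" "b \<in> nz_zero_divisors R"
      "c \<in> nz_zero_divisors R"
    and classes: "ann_class R a \<noteq> ann_class R b" "ann_class R a \<noteq> ann_class R c"
      "ann_class R b \<noteq> ann_class R c"
    using assms unfolding GammaE_vertices_def by auto
  have ann_abc: "ann R a \<noteq> ann R b" "ann R a \<noteq> ann R c" "ann R b \<noteq> ann R c"
    using classes ann_class_eq_iff[OF nz_zero_divisorsD(1)[OF abc(1)]]
      ann_class_eq_iff[OF nz_zero_divisorsD(1)[OF abc(2)]] by simp_all
  consider "ann R a = ann R x" | "ann R b = ann R x" | "ann R a \<noteq> ann R x" "ann R b \<noteq> ann R x"
    by blast
  then show thesis
  proof cases
    case 1
    then show thesis using that[OF abc(2,3)] ann_abc by simp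
  next
    case 2
    then show thesis using that[OF abc(1,3)] ann_abc by simp
  next
    case 3
    then show thesis using that[OF abc(1,2)] ann_abc by simp
  qed
qed

theorem proposition1p5:
  fixes R :: "('a, 'b) ring_scheme"
  assumes "cring R" and "noetherian_ring R"
    and "\<exists>A \<in> GammaE_vertices R. \<exists>B \<in> GammaE_vertices R. \<exists>C \<in> GammaE_vertices R.
           A \<noteq> B \<and> A \<noteq> C \<and> B \<noteq> C"
  shows "\<not> GammaE_complete R"
proof
  assume complete: "GammaE_complete R"
  interpret cring R by fact
  let ?Z = "nz_zero_divisors R"
  have "?Z \<noteq> {}" using assms(3) unfolding GammaE_vertices_def by blast
  moreover have "?Z \<subseteq> carrier R" by (auto simp: nz_zero_divisors_def)
  ultimately obtain x where x: "x \<in> ?Z"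
    and x_max: "\<And>w. w \<in> ?Z \<Longrightarrow> ann R x \<subseteq> ann R w \<Longrightarrow> ann R w = ann R x"
    using ex_maximal_ann[OF assms(1,2)] by blast
  obtain y z where yz: "y \<in> ?Z" "z \<in> ?Z"
    and ann_xyz: "ann R y \<noteq> ann R x" "ann R z \<noteq> ann R x" "ann R y \<noteq> ann R z"
    using GammaE_two_vertices_avoiding[OF assms(3)] .
  obtain r where r: "r \<in> ?Z" "ann R r = ann R y" "r \<otimes>\<^bsub>R\<^esub> r \<noteq> \<zero>\<^bsub>R\<^esub>"
    using GammaE_complete_non_nilpotent_in_class[OF complete x x_max yz(1) ann_xyz(1)] by blast
  obtain s where s: "s \<in> ?Z" "ann R s = ann R z" "s \<otimes>\<^bsub>R\<^esub> s \<noteq> \<zero>\<^bsub>R\<^esub>"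
    using GammaE_complete_non_nilpotent_in_class[OF complete x x_max yz(2) ann_xyz(2)] by blast
  have "r \<otimes>\<^bsub>R\<^esub> r = \<zero>\<^bsub>R\<^esub> \<or> s \<otimes>\<^bsub>R\<^esub> s = \<zero>\<^bsub>R\<^esub>"
    by (rule GammaE_complete_square_eq_zero[OF complete r(1) s(1) x]) (use r s ann_xyz in simp_all)
  then show False using r(3) s(3) by simp
qed

end
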